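(* Consider the partial-block protocol described in the context, on a finite set of agents $A$ with a connected undirected connectivity graph $G=(A,E)$ and block length $L$. If at some epoch $t$ a deadlock occurs, i.e. $D(i)$ holds for every $i\in A$, then for every edge $(i,j)\in E$ we have $\{i,j\}\subseteq pb_i^{(t)}$ (and symmetrically $\{i,j\}\subseteq pb_j^{(t)}$).
   Context: Let $A$ be a finite set of agents (agent IDs) and $G=(A,E)$ a connected undirected graph; $\Gamma_i$ denotes the set of neighbors of $i$. Fix an integer $L\ge 1$ (block length). Each agent $i$ maintains a partial block $pb_i\subseteq A$ (a set of agent IDs). The system runs in epochs $t=0,1,2,\dots$; $pb_i^{(t)}$ is agent $i$'s partial block at the start of epoch $t$. In each epoch: (C1) every agent $i$ with $i\notin pb_i$ adds $i$ to $pb_i$; (C2) every agent $i$ sends its $pb_i$ to every neighbor $j\in\Gamma_i$. When an agent $i$ receives a partial block $P$ (from a neighbor or via a direct message) it applies the rule: (R1) if $|P\setminus\{i\}|>|pb_i\setminus\{i\}|$, agent $i$ sets $pb_i:=P$; (R2) otherwise, if $|P\setminus\{i\}|=|pb_i\setminus\{i\}|$ and $P\neq pb_i$, agent $i$ sends its current $pb_i$ directly to every agent in $P\setminus pb_i$, each of which processes it by the same rule; (R3) otherwise the received block is discarded. All received partial blocks are assumed to pass all validity and similarity checks. For an agent $i$ and epoch $t$, the predicate $D(i)$ means: $pb_i^{(t)}=pb_i^{(t+1)}$ and $|pb_i^{(t)}|<L$. A deadlock at epoch $t$ means that $D(i)$ holds for all $i\in A$. *)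

theory Defs
  imports Main "HOL-Library.Multiset"
begin

definition Gamma :: "('a \<times> 'a) set \<Rightarrow> 'a \<Rightarrow> 'a set" where
  "Gamma E i = {j. (i, j) \<in> E}"

definition undirected_connected_graph :: "'a set \<Rightarrow> ('a \<times> 'a) set \<Rightarrow> bool" where
  "undirected_connected_graph A E \<longleftrightarrow>
     E \<subseteq> A \<times> A \<and> sym E \<and> irrefl E \<and> (\<forall>i\<in>A. \<forall>j\<in>A. (i, j) \<in> E\<^sup>*)"

(* A pending message: (recipient, partial block carried). *)
type_synonym 'a msg = "'a \<times> 'a set"

(* Agent k receives partial block P in local state pb: rules R1, R2, R3.
   Returns the new state and the multiset of newly sent direct messages. *)
definition receive :: "'a \<Rightarrow> 'a set \<Rightarrow> ('a \<Rightarrow> 'a set) \<Rightarrow> ('a \<Rightarrow> 'a set) \<times> 'a msg multiset" where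
  "receive k P pb =
     (if card (P - {k}) > card (pb k - {k}) then (pb(k := P), {#})
      else if card (P - {k}) = card (pb k - {k}) \<and> P \<noteq> pb k
        then (pb, mset_set ((\<lambda>m. (m, pb k)) ` (P - pb k)))
      else (pb, {#}))"

inductive msg_step :: "('a \<Rightarrow> 'a set) \<times> 'a msg multiset \<Rightarrow> ('a \<Rightarrow> 'a set) \<times> 'a msg multiset \<Rightarrow> bool" where
  "(k, P) \<in># M \<Longrightarrow> receive k P pb = (pb', N) \<Longrightarrow>
   msg_step (pb, M) (pb', M - {#(k, P)#} + N)"

definition after_C1 :: "'a set \<Rightarrow> ('a \<Rightarrow> 'a set) \<Rightarrow> 'a \<Rightarrow> 'a set" where
  "after_C1 A pb = (\<lambda>i. if i \<in> A then insert i (pb i) else pb i)"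

definition C2_msgs :: "'a set \<Rightarrow> ('a \<times> 'a) set \<Rightarrow> ('a \<Rightarrow> 'a set) \<Rightarrow> 'a msg multiset" where
  "C2_msgs A E pb = (\<Sum>i\<in>A. mset_set ((\<lambda>j. (j, pb i)) ` Gamma E i))"

(* One epoch: C1, then C2, then all messages (including those generated by R2)
   are delivered in some order until none is pending; pb' is the resulting state,
   i.e. the partial blocks at the start of the next epoch. *)
definition epoch :: "'a set \<Rightarrow> ('a \<times> 'a) set \<Rightarrow> ('a \<Rightarrow> 'a set) \<Rightarrow> ('a \<Rightarrow> 'a set) \<Rightarrow> bool" where
  "epoch A E pb pb' \<longleftrightarrow>
     msg_step\<^sup>*\<^sup>* (after_C1 A pb, C2_msgs A E (after_C1 A pb)) (pb', {#})"

(* The predicate D(i) at epoch t for the run pbs (pbs t i = pb_i^(t)). *)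
definition D :: "nat \<Rightarrow> (nat \<Rightarrow> 'a \<Rightarrow> 'a set) \<Rightarrow> nat \<Rightarrow> 'a \<Rightarrow> bool" where
  "D L pbs t i \<longleftrightarrow> pbs t i = pbs (Suc t) i \<and> card (pbs t i) < L"

definition deadlock :: "'a set \<Rightarrow> nat \<Rightarrow> (nat \<Rightarrow> 'a \<Rightarrow> 'a set) \<Rightarrow> nat \<Rightarrow> bool" where
  "deadlock A L pbs t \<longleftrightarrow> (\<forall>i\<in>A. D L pbs t i)"

end

theory Submission
  imports Defs
begin

(* During the deliveries of an epoch only rule R1 changes a block pb_k, and it strictly
   increases |pb_k - {k}|.  Hence an epoch that ends with every block equal to its initial
   value never changed any block: C1 added nothing, so k \<in> pb_k, and every C2 message
   pb_j sent to a neighbour i was rejected by R1 when delivered, so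
   |pb_j - {i}| \<le> |pb_i - {i}|.  Counting with this inequality and its mirror image forces
   j \<in> pb_i and i \<in> pb_j. *)

lemma receive_state:
  "fst (receive k P pb) = (if card (pb k - {k}) < card (P - {k}) then pb(k := P) else pb)"
  unfolding receive_def by simp

lemma set_mset_receive:
  "set_mset (snd (receive k P pb)) \<subseteq> (\<lambda>m. (m, pb k)) ` (P - pb k)"
proof -
  have mset_set_sub: "set_mset (mset_set S) \<subseteq> S" for S :: "'b set"
    by (cases "finite S") simp_all
  show ?thesis unfolding receive_def by (simp add: mset_set_sub)
qed

lemma msg_step_block_eq_or_grows:
  assumes "msg_step s s'"
  shows "fst s' k = fst s k \<or> card (fst s k - {k}) < card (fst s' k - {k})"
  using assms
proof cases
  case (1 k' P M pb pb' N)
  from 1(4) have "pb' = fst (receive k' P pb)" by simp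
  then have "pb' = (if card (pb k' - {k'}) < card (P - {k'}) then pb(k' := P) else pb)"
    by (simp only: receive_state)
  with 1(1,2) show ?thesis by (cases "k = k'") auto
qed

lemma msg_steps_block_eq_or_grows:
  assumes "msg_step\<^sup>*\<^sup>* s s'"
  shows "fst s' k = fst s k \<or> card (fst s k - {k}) < card (fst s' k - {k})"
  using assms
proof (induction rule: rtranclp_induct)
  case (step s' s'')
  from msg_step_block_eq_or_grows[OF step.hyps(2), of k] show ?case
  proof
    assume "fst s'' k = fst s' k"
    with step.IH show ?case by simp
  next
    assume grows: "card (fst s' k - {k}) < card (fst s'' k - {k})"
    from step.IH have "card (fst s k - {k}) \<le> card (fst s' k - {k})"
      by (elim disjE) simp_all
    with grows show ?case by simp
  qed
qed simp

lemma msg_steps_block_unchanged_between: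
  assumes "msg_step\<^sup>*\<^sup>* s s'" "msg_step\<^sup>*\<^sup>* s' s''" "fst s'' k = fst s k"
  shows "fst s' k = fst s k"
proof (rule ccontr)
  assume "fst s' k \<noteq> fst s k"
  then have "card (fst s k - {k}) < card (fst s' k - {k})"
    using msg_steps_block_eq_or_grows[OF assms(1)] by blast
  also have "\<dots> \<le> card (fst s'' k - {k})"
    using msg_steps_block_eq_or_grows[OF assms(2), of k] by (elim disjE) simp_all
  finally show False using assms(3) by simp
qed

lemma drained_unchanged_block_bounds_pending:
  assumes "msg_step\<^sup>*\<^sup>* s s'" "snd s' = {#}" "(k, P) \<in># snd s" "fst s' k = fst s k"
  shows "card (P - {k}) \<le> card (fst s k - {k})"
  using assms
proof (induction rule: converse_rtranclp_induct)
  case base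
  then show ?case by simp
next
  case (step s\<^sub>0 s\<^sub>1)
  have unchanged: "fst s\<^sub>1 k = fst s\<^sub>0 k"
    using msg_steps_block_unchanged_between[OF r_into_rtranclp[of msg_step, OF step.hyps(1)]
        step.hyps(2) step.prems(3)] .
  show ?case
  proof (cases "(k, P) \<in># snd s\<^sub>1")
    case True
    with step.IH step.prems unchanged show ?thesis by simp
  next
    case False
    from step.hyps(1) show ?thesis
    proof cases
      case (1 k' P' M pb pb' N)
      from False step.prems(2) 1(1,2) have "(k', P') = (k, P)"
        by (auto simp: in_diff_count split: if_splits)
      moreover from 1(4) have "pb' = fst (receive k' P' pb)" by simp
      ultimately have "pb' k = (if card (pb k - {k}) < card (P - {k}) then P else pb k)"
        by (simp add: receive_state)
      with unchanged 1(1,2) show ?thesis by (auto split: if_splits)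
    qed
  qed
qed

(* Only needed to keep the blocks finite: card is 0 on infinite sets. *)
definition confined :: "'a set \<Rightarrow> ('a \<Rightarrow> 'a set) \<times> 'a msg multiset \<Rightarrow> bool" where
  "confined A s \<longleftrightarrow> (\<forall>k\<in>A. fst s k \<subseteq> A) \<and> (\<forall>(k, P)\<in>#snd s. k \<in> A \<and> P \<subseteq> A)"

lemma msg_step_confined:
  assumes "msg_step s s'" "confined A s"
  shows "confined A s'"
  using assms(1)
proof cases
  case (1 k P M pb pb' N)
  from assms(2) 1(1,3) have "k \<in> A" "P \<subseteq> A" and pb: "\<forall>k\<in>A. pb k \<subseteq> A"
    and M: "\<forall>(m, Q)\<in>#M. m \<in> A \<and> Q \<subseteq> A"
    by (auto simp: confined_def)
  from 1(4) have "pb' = fst (receive k P pb)" "N = snd (receive k P pb)"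
    by simp_all
  then have pb': "pb' = (if card (pb k - {k}) < card (P - {k}) then pb(k := P) else pb)"
    and N: "set_mset N \<subseteq> (\<lambda>m. (m, pb k)) ` (P - pb k)"
    by (simp_all only: receive_state set_mset_receive)
  have pb'_confined: "\<forall>k\<in>A. pb' k \<subseteq> A"
    using pb \<open>P \<subseteq> A\<close> unfolding pb' by auto
  have "m \<in> A \<and> Q \<subseteq> A" if "(m, Q) \<in># M - {#(k, P)#} + N" for m Q
  proof -
    from that consider "(m, Q) \<in># M" | "(m, Q) \<in># N"
      by (auto dest: in_diffD)
    then show ?thesis
    proof cases
      case 1
      with M show ?thesis by blast
    next
      case 2
      with N have "m \<in> P" "Q = pb k" by auto
      with \<open>k \<in> A\<close> \<open>P \<subseteq> A\<close> pb show ?thesis by auto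
    qed
  qed
  then have "\<forall>(m, Q)\<in>#M - {#(k, P)#} + N. m \<in> A \<and> Q \<subseteq> A"
    by blast
  with pb'_confined show ?thesis
    unfolding 1(2) confined_def by simp
qed

lemma msg_steps_confined:
  assumes "msg_step\<^sup>*\<^sup>* s s'" "confined A s"
  shows "confined A s'"
  using assms by induction (auto intro: msg_step_confined)

lemma set_mset_C2_msgs:
  assumes "finite A" "E \<subseteq> A \<times> A"
  shows "set_mset (C2_msgs A E pb) = {(j, pb i) | i j. (i, j) \<in> E}"
proof -
  have "finite (Gamma E i)" for i
    using assms by (auto simp: Gamma_def intro: finite_subset[of _ A])
  with assms show ?thesis
    unfolding C2_msgs_def by (auto simp: set_mset_sum Gamma_def)
qed

lemma epoch_confined:
  assumes "finite A" "E \<subseteq> A \<times> A" "\<forall>k\<in>A. pb k \<subseteq> A" "epoch A E pb pb'"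
  shows "\<forall>k\<in>A. pb' k \<subseteq> A"
proof -
  let ?C = "after_C1 A pb"
  have "confined A (?C, C2_msgs A E ?C)"
    using assms(1-3) by (auto simp: confined_def set_mset_C2_msgs after_C1_def)
  with assms(4) have "confined A (pb', {#})"
    unfolding epoch_def by (rule msg_steps_confined)
  then show ?thesis by (simp add: confined_def)
qed

lemma fixed_epoch_self_mem:
  assumes "epoch A E pb pb'" "k \<in> A" "pb' k = pb k"
  shows "k \<in> pb k"
proof (rule ccontr)
  assume "k \<notin> pb k"
  with assms(2) have "after_C1 A pb k \<noteq> pb k" "after_C1 A pb k - {k} = pb k - {k}"
    by (auto simp: after_C1_def)
  with msg_steps_block_eq_or_grows[OF assms(1)[unfolded epoch_def], of k] assms(3) show False
    by simp
qed

lemma fixed_epoch_neighbour_bound: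
  assumes "finite A" "E \<subseteq> A \<times> A" "epoch A E pb pb'" "\<forall>k\<in>A. pb' k = pb k" "(j, i) \<in> E"
  shows "card (pb j - {i}) \<le> card (pb i - {i})"
proof -
  let ?C = "after_C1 A pb"
  have C_eq: "?C k = pb k" if "k \<in> A" for k
    using fixed_epoch_self_mem[OF assms(3) that] assms(4) that by (auto simp: after_C1_def)
  from assms(2,5) have "i \<in> A" "j \<in> A" by auto
  moreover have "(i, ?C j) \<in># C2_msgs A E ?C"
    using assms(1,2,5) by (auto simp: set_mset_C2_msgs)
  ultimately show ?thesis
    using drained_unchanged_block_bounds_pending[OF assms(3)[unfolded epoch_def], of i "?C j"]
      assms(4) C_eq by simp
qed

lemma mem_if_card_remove_le:
  assumes "finite X" "i \<in> X" "j \<in> Y"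
    and "card (Y - {i}) \<le> card (X - {i})" "card (X - {j}) \<le> card (Y - {j})"
  shows "j \<in> X"
proof (rule ccontr)
  assume "j \<notin> X"
  with assms(3,5) have "card X \<le> card Y - 1" by simp
  also have "\<dots> \<le> card (Y - {i})" by (simp add: card_Diff_singleton_if)
  also have "\<dots> \<le> card X - 1" using assms(2,4) by simp
  finally have "card X \<le> card X - 1" .
  moreover have "card X > 0" using assms(1,2) card_gt_0_iff by blast
  ultimately show False by linarith
qed

lemma fixed_epoch_edge_blocks:
  assumes "finite A" "undirected_connected_graph A E" "\<forall>k\<in>A. pb k \<subseteq> A"
    and "epoch A E pb pb'" "\<forall>k\<in>A. pb' k = pb k" "(i, j) \<in> E"
  shows "{i, j} \<subseteq> pb i \<and> {i, j} \<subseteq> pb j"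
proof -
  from assms(2) have E: "E \<subseteq> A \<times> A" "sym E"
    by (simp_all add: undirected_connected_graph_def)
  with assms(6) have "i \<in> A" "j \<in> A" "(j, i) \<in> E" by (auto dest: symD)
  with assms(1,3) have fin: "finite (pb i)" "finite (pb j)"
    by (auto intro: finite_subset)
  from \<open>i \<in> A\<close> \<open>j \<in> A\<close> assms(4,5) have self: "i \<in> pb i" "j \<in> pb j"
    by (auto intro: fixed_epoch_self_mem)
  have bounds: "card (pb j - {i}) \<le> card (pb i - {i})" "card (pb i - {j}) \<le> card (pb j - {j})"
    using fixed_epoch_neighbour_bound[OF assms(1) E(1) assms(4,5)] \<open>(j, i) \<in> E\<close> assms(6)
    by blast+
  have "j \<in> pb i" "i \<in> pb j"
    using mem_if_card_remove_le[OF fin(1) self bounds]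
      mem_if_card_remove_le[OF fin(2) self(2,1) bounds(2,1)] .
  with self show ?thesis by simp
qed

theorem lemma2:
  fixes A :: "'a set" and E :: "('a \<times> 'a) set" and L :: nat
    and pbs :: "nat \<Rightarrow> 'a \<Rightarrow> 'a set" and t :: nat
  assumes "finite A"
    and "undirected_connected_graph A E"
    and "L \<ge> 1"
    and "\<forall>i\<in>A. pbs 0 i \<subseteq> A"
    and "\<forall>s\<le>t. epoch A E (pbs s) (pbs (Suc s))"
    and "deadlock A L pbs t"
  shows "\<forall>(i, j)\<in>E. {i, j} \<subseteq> pbs t i \<and> {i, j} \<subseteq> pbs t j"
proof -
  from assms(2) have "E \<subseteq> A \<times> A" by (simp add: undirected_connected_graph_def)
  have blocks_within: "\<forall>k\<in>A. pbs s k \<subseteq> A" if "s \<le> t" for s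
    using that
  proof (induction s)
    case (Suc s)
    then have "\<forall>k\<in>A. pbs s k \<subseteq> A" by simp
    moreover from assms(5) Suc.prems have "epoch A E (pbs s) (pbs (Suc s))" by simp
    ultimately show ?case by (rule epoch_confined[OF assms(1) \<open>E \<subseteq> A \<times> A\<close>])
  qed (use assms(4) in simp)
  from assms(6) have "\<forall>k\<in>A. pbs (Suc t) k = pbs t k"
    by (simp add: deadlock_def D_def)
  moreover from assms(5) have "epoch A E (pbs t) (pbs (Suc t))" by simp
  ultimately show ?thesis
    using fixed_epoch_edge_blocks[OF assms(1,2) blocks_within[OF order_refl]] by blast
qed
end
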